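(* For every bracket pattern $w$, $\langle\!\langle w\rangle\!\rangle=\{w'\mid w'\text{ bracket pattern},\ A(w')\subseteq A(w)\}$.
   Context: $\mathbb N=\{1,2,\dots\}$, $\mathbb N_0=\mathbb N\cup\{0\}$. A bracket pattern is a non-empty finite subset $w\subseteq\mathbb N$; $\|w\|:=\max(w)$. For bracket patterns $w,w'$: superposition $w\cup w'$; for $j\in w$ the projection $\cap_j w:=\{i\in w\mid i\le j\}$; the dual $w^\dagger:=\{\|w\|-i\mid i\in\mathbb N_0,\ i<\|w\|,\ i\notin w\}$. A bracket pattern category is a set of bracket patterns closed under superposition, duals and projections; $\langle\!\langle w\rangle\!\rangle$ denotes the smallest bracket pattern category containing $w$. The completion of a bracket pattern $w$ is $A(w):=\{j-i\mid j\in w,\ i\in\mathbb N_0,\ i\notin w,\ i<j\}$. *)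

theory Defs
  imports Main
begin

definition bracket_pattern :: "nat set \<Rightarrow> bool" where
  "bracket_pattern w \<longleftrightarrow> finite w \<and> w \<noteq> {} \<and> 0 \<notin> w"

definition bnorm :: "nat set \<Rightarrow> nat" where
  "bnorm w = Max w"

definition proj :: "nat \<Rightarrow> nat set \<Rightarrow> nat set" where
  "proj j w = {i \<in> w. i \<le> j}"

definition bdual :: "nat set \<Rightarrow> nat set" where
  "bdual w = {bnorm w - i | i. i < bnorm w \<and> i \<notin> w}"

definition bp_category :: "nat set set \<Rightarrow> bool" where
  "bp_category C \<longleftrightarrow>
     (\<forall>w\<in>C. bracket_pattern w) \<and>
     (\<forall>w\<in>C. \<forall>w'\<in>C. w \<union> w' \<in> C) \<and>
     (\<forall>w\<in>C. bdual w \<noteq> {} \<longrightarrow> bdual w \<in> C) \<and>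
     (\<forall>w\<in>C. \<forall>j\<in>w. proj j w \<in> C)"

definition generated_cat :: "nat set \<Rightarrow> nat set set" where
  "generated_cat w = \<Inter> {C. bp_category C \<and> w \<in> C}"

definition completion :: "nat set \<Rightarrow> nat set" where
  "completion w = {j - i | j i. j \<in> w \<and> i \<notin> w \<and> i < j}"

end

theory Submission
  imports Defs
begin

text \<open>
  A pattern with completion inside \<open>A(w)\<close> is built in the category generated by \<open>w\<close> by
  induction on its maximum \<open>m\<close>. Since \<open>m \<in> A(y) \<subseteq> A(w)\<close>, say \<open>m = j - i\<close> with \<open>j \<in> w\<close>,
  \<open>i \<notin> w\<close>, the pattern \<open>\<inter>\<^sub>m (\<inter>\<^sub>j w)\<^sup>\<dagger>\<close> has maximum \<open>m\<close>. Adding to it \<open>y\<^sup>\<dagger>\<close> without its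
  maximum (available by induction, as are all projections below the maximum) gives a pattern
  containing \<open>y\<^sup>\<dagger>\<close> with the same maximum, whose dual is therefore contained in \<open>y\<close> and contains
  \<open>m\<close>; together with \<open>y\<close> without its maximum this recovers \<open>y\<close>. Conversely, superposition,
  projections and duals do not enlarge the completion.
\<close>

lemma
  assumes "bracket_pattern v"
  shows bracket_pattern_Max_in: "Max v \<in> v"
    and bracket_pattern_le_Max: "x \<in> v \<Longrightarrow> x \<le> Max v"
    and bracket_pattern_pos: "x \<in> v \<Longrightarrow> 0 < x"
  using assms unfolding bracket_pattern_def by (auto intro: Max_in Max_ge gr0I)

lemma bracket_pattern_Un:
  "bracket_pattern v \<Longrightarrow> bracket_pattern v' \<Longrightarrow> bracket_pattern (v \<union> v')"
  unfolding bracket_pattern_def by auto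

lemma mem_bdual_iff: "x \<in> bdual v \<longleftrightarrow> 0 < x \<and> x \<le> Max v \<and> Max v - x \<notin> v"
proof
  assume "x \<in> bdual v"
  then show "0 < x \<and> x \<le> Max v \<and> Max v - x \<notin> v"
    unfolding bdual_def bnorm_def by auto
next
  assume x: "0 < x \<and> x \<le> Max v \<and> Max v - x \<notin> v"
  then have "x = Max v - (Max v - x)" "Max v - x < Max v" by auto
  with x show "x \<in> bdual v"
    unfolding bdual_def bnorm_def by blast
qed

lemma
  assumes "bracket_pattern v"
  shows Max_in_bdual: "Max v \<in> bdual v"
    and Max_bdual: "Max (bdual v) = Max v"
    and bracket_pattern_bdual: "bracket_pattern (bdual v)"
proof -
  show max_in: "Max v \<in> bdual v"
    using assms bracket_pattern_pos[OF assms bracket_pattern_Max_in[OF assms]]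
    unfolding mem_bdual_iff bracket_pattern_def by auto
  have bounded: "bdual v \<subseteq> {..Max v}"
    by (auto simp: mem_bdual_iff)
  then have "finite (bdual v)"
    by (rule finite_subset) simp
  with max_in bounded show "Max (bdual v) = Max v"
    by (auto intro: Max_eqI)
  have "0 \<notin> bdual v"
    by (simp add: mem_bdual_iff)
  with \<open>finite (bdual v)\<close> max_in show "bracket_pattern (bdual v)"
    unfolding bracket_pattern_def by blast
qed

lemma bdual_bdual:
  assumes "bracket_pattern v"
  shows "bdual (bdual v) = v"
proof (rule set_eqI)
  fix x
  have "x \<in> bdual (bdual v) \<longleftrightarrow> 0 < x \<and> x \<le> Max v \<and> Max v - x \<notin> bdual v"
    by (simp add: mem_bdual_iff Max_bdual[OF assms])
  also have "\<dots> \<longleftrightarrow> x \<in> v"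
    using bracket_pattern_Max_in[OF assms] bracket_pattern_le_Max[OF assms]
      bracket_pattern_pos[OF assms]
    by (cases "x = Max v") (auto simp: mem_bdual_iff)
  finally show "x \<in> bdual (bdual v) \<longleftrightarrow> x \<in> v" .
qed

lemma bdual_antimono: "Max v = Max v' \<Longrightarrow> v \<subseteq> v' \<Longrightarrow> bdual v' \<subseteq> bdual v"
  by (auto simp: mem_bdual_iff)

lemma
  assumes "bracket_pattern v" and "j \<in> v"
  shows bracket_pattern_proj: "bracket_pattern (proj j v)"
    and Max_proj: "Max (proj j v) = j"
proof -
  have "finite (proj j v)" "j \<in> proj j v"
    using assms unfolding bracket_pattern_def proj_def by auto
  then show "bracket_pattern (proj j v)" "Max (proj j v) = j"
    using assms unfolding bracket_pattern_def proj_def by (auto intro: Max_eqI)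
qed

lemma Diff_Max_eq_proj:
  assumes "bracket_pattern v" and "v - {Max v} \<noteq> {}"
  obtains k where "k \<in> v" "k < Max v" "proj k v = v - {Max v}"
proof
  have "finite (v - {Max v})"
    using assms(1) unfolding bracket_pattern_def by simp
  then have k: "Max (v - {Max v}) \<in> v - {Max v}" "\<And>x. x \<in> v - {Max v} \<Longrightarrow> x \<le> Max (v - {Max v})"
    using Max_in[OF _ assms(2)] Max_ge by auto
  then show "Max (v - {Max v}) \<in> v" "Max (v - {Max v}) < Max v"
    using bracket_pattern_le_Max[OF assms(1)] by (auto simp: le_less)
  with k show "proj (Max (v - {Max v})) v = v - {Max v}"
    unfolding proj_def by fastforce
qed

lemma mem_completion_iff: "x \<in> completion v \<longleftrightarrow> (\<exists>j i. j \<in> v \<and> i \<notin> v \<and> i < j \<and> x = j - i)"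
  unfolding completion_def by auto

lemma Max_in_completion:
  assumes "bracket_pattern v"
  shows "Max v \<in> completion v"
proof -
  have "Max v \<in> v" "0 < Max v" "0 \<notin> v"
    using assms bracket_pattern_Max_in bracket_pattern_pos unfolding bracket_pattern_def by auto
  then show ?thesis
    unfolding mem_completion_iff by (intro exI[of _ "Max v"] exI[of _ 0]) simp
qed

lemma completion_Un_subset: "completion (v \<union> v') \<subseteq> completion v \<union> completion v'"
  unfolding completion_def by blast

lemma completion_proj_subset: "completion (proj j v) \<subseteq> completion v"
  unfolding mem_completion_iff proj_def subset_iff by force

text \<open>A difference \<open>j - i\<close> in the dual comes from the difference \<open>(m - i) - (m - j)\<close> in \<open>v\<close>,
  where \<open>m = Max v\<close>.\<close>

lemma completion_bdual_subset:
  assumes "bracket_pattern v"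
  shows "completion (bdual v) \<subseteq> completion v"
proof
  fix x
  assume "x \<in> completion (bdual v)"
  then obtain j i where ji: "j \<in> bdual v" "i \<notin> bdual v" "i < j" "x = j - i"
    unfolding mem_completion_iff by blast
  then have j: "j \<le> Max v" "Max v - j \<notin> v"
    unfolding mem_bdual_iff by auto
  have "Max v - i \<in> v"
  proof (cases "i = 0")
    case True
    then show ?thesis using bracket_pattern_Max_in[OF assms] by simp
  next
    case False
    then show ?thesis using ji(2,3) j(1) unfolding mem_bdual_iff by auto
  qed
  with j ji(3,4) show "x \<in> completion v"
    unfolding mem_completion_iff by (intro exI[of _ "Max v - i"] exI[of _ "Max v - j"]) auto
qed

lemma
  assumes "bp_category C" and "v \<in> C"
  shows bp_category_bracket_pattern: "bracket_pattern v"
    and bp_category_Un: "v' \<in> C \<Longrightarrow> v \<union> v' \<in> C"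
    and bp_category_proj: "j \<in> v \<Longrightarrow> proj j v \<in> C"
    and bp_category_bdual: "bdual v \<in> C"
proof -
  show bp: "bracket_pattern v"
    using assms unfolding bp_category_def by blast
  show "v' \<in> C \<Longrightarrow> v \<union> v' \<in> C" "j \<in> v \<Longrightarrow> proj j v \<in> C"
    using assms unfolding bp_category_def by blast+
  show "bdual v \<in> C"
    using assms Max_in_bdual[OF bp] unfolding bp_category_def by blast
qed

lemma bp_category_completion_bounded:
  "bp_category {v. bracket_pattern v \<and> completion v \<subseteq> completion w}"
  unfolding bp_category_def
  using bracket_pattern_Un completion_Un_subset bracket_pattern_bdual completion_bdual_subset
    bracket_pattern_proj completion_proj_subset
  by (blast intro: subset_trans)

lemma bp_category_Max_eq_completion_elem:
  assumes C: "bp_category C" and "w \<in> C" and "m \<in> completion w"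
  obtains R where "R \<in> C" "Max R = m"
proof -
  obtain j i where ji: "j \<in> w" "i \<notin> w" "i < j" "m = j - i"
    using assms(3) unfolding mem_completion_iff by blast
  have bp: "bracket_pattern (proj j w)" "Max (proj j w) = j"
    using bracket_pattern_proj Max_proj bp_category_bracket_pattern[OF C \<open>w \<in> C\<close>] ji(1)
    by auto
  have m: "m \<in> bdual (proj j w)"
    using bp(2) ji unfolding mem_bdual_iff proj_def by auto
  show ?thesis
  proof
    show "proj m (bdual (proj j w)) \<in> C"
      using C \<open>w \<in> C\<close> ji(1) m by (intro bp_category_proj bp_category_bdual)
    show "Max (proj m (bdual (proj j w))) = m"
      using Max_proj[OF bracket_pattern_bdual[OF bp(1)] m] .
  qed
qed

lemma bp_category_insert_Max:
  assumes C: "bp_category C" and y: "bracket_pattern y"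
    and R: "R \<in> C" "Max R = Max y"
    and lower_y: "y - {Max y} = {} \<or> y - {Max y} \<in> C"
    and lower_dual: "bdual y - {Max y} = {} \<or> bdual y - {Max y} \<in> C"
  shows "y \<in> C"
proof -
  define Q where "Q = (bdual y - {Max y}) \<union> R"
  have Q: "Q \<in> C"
    using lower_dual bp_category_Un[OF C _ R(1)] R(1) unfolding Q_def by (metis sup_bot_left)
  have R_bp: "bracket_pattern R"
    using bp_category_bracket_pattern[OF C R(1)] .
  have R_max: "Max y \<in> R"
    using bracket_pattern_Max_in[OF R_bp] R(2) by simp
  have R_le: "\<And>x. x \<in> R \<Longrightarrow> x \<le> Max y"
    using bracket_pattern_le_Max[OF R_bp] R(2) by simp
  have dual_max: "\<And>x. x \<in> bdual y \<Longrightarrow> x \<le> Max y"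
    unfolding mem_bdual_iff by auto
  have "Max Q = Max y"
    using bp_category_bracket_pattern[OF C Q] R_max R_le dual_max unfolding Q_def bracket_pattern_def
    by (intro Max_eqI) auto
  moreover have "bdual y \<subseteq> Q"
    using R_max unfolding Q_def by auto
  ultimately have "bdual Q \<subseteq> y"
    using bdual_antimono[of "bdual y" Q] Max_bdual[OF y] bdual_bdual[OF y] by simp
  moreover have "Max y \<in> bdual Q"
    using Max_in_bdual[OF bp_category_bracket_pattern[OF C Q]] \<open>Max Q = Max y\<close> by simp
  ultimately have "y = (y - {Max y}) \<union> bdual Q"
    by blast
  moreover have "bdual Q \<in> C"
    using bp_category_bdual[OF C Q] .
  ultimately show "y \<in> C"
    using lower_y bp_category_Un[OF C _ \<open>bdual Q \<in> C\<close>] by (metis sup_bot_left)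
qed

lemma completion_bounded_mem_bp_category:
  assumes C: "bp_category C" and "w \<in> C"
    and "bracket_pattern y" and "completion y \<subseteq> completion w"
  shows "y \<in> C"
  using assms(3,4)
proof (induction "Max y" arbitrary: y rule: less_induct)
  case less
  have lower: "v - {Max v} = {} \<or> v - {Max v} \<in> C"
    if v: "bracket_pattern v" "completion v \<subseteq> completion w" "Max v = Max y" for v
  proof (cases "v - {Max v} = {}")
    case False
    then obtain k where k: "k \<in> v" "k < Max v" "proj k v = v - {Max v}"
      using Diff_Max_eq_proj[OF v(1)] by blast
    have "proj k v \<in> C"
      using less.hyps[of "proj k v"] Max_proj[OF v(1) k(1)] bracket_pattern_proj[OF v(1) k(1)]
        completion_proj_subset[of k v] k(2) v(2,3)
      by auto
    with k(3) show ?thesis by simp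
  qed simp
  obtain R where "R \<in> C" "Max R = Max y"
    using bp_category_Max_eq_completion_elem[OF C \<open>w \<in> C\<close>]
      Max_in_completion[OF less.prems(1)] less.prems(2) by blast
  moreover have "bdual y - {Max y} = {} \<or> bdual y - {Max y} \<in> C"
    using lower[of "bdual y"] bracket_pattern_bdual Max_bdual completion_bdual_subset less.prems
    by fastforce
  ultimately show "y \<in> C"
    using bp_category_insert_Max[OF C less.prems(1)] lower[OF less.prems] by blast
qed

theorem lemma7p9:
  assumes "bracket_pattern w"
  shows "generated_cat w = {w'. bracket_pattern w' \<and> completion w' \<subseteq> completion w}"
proof
  show "generated_cat w \<subseteq> {w'. bracket_pattern w' \<and> completion w' \<subseteq> completion w}"
    unfolding generated_cat_def using bp_category_completion_bounded assms by blast
  show "{w'. bracket_pattern w' \<and> completion w' \<subseteq> completion w} \<subseteq> generated_cat w"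
    unfolding generated_cat_def using completion_bounded_mem_bp_category by blast
qed

end
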